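(* Let $\kappa$ be a regular uncountable cardinal and $I$ an ideal on $\kappa$. Then $I$ is pleasant if and only if $I$ is densely pleasant, i.e. for every $A\in I^+$ there is $B\in (I\restriction A)^+$ such that $I\restriction B$ is pleasant.
   Context: An ideal on $\kappa$ is a family of subsets of $\kappa$ closed under subsets and finite unions, which is $<\kappa$-complete and contains all singletons. $I^+=\{X\subseteq\kappa: X\notin I\}$, and for $A\in I^+$, $I\restriction A=\{X\subseteq\kappa: X\cap A\in I\}$. For $A\subseteq\kappa$ and $X_\alpha\subseteq\kappa$, $\bigtriangledown_{\alpha\in A}X_\alpha=\{\xi<\kappa:\exists\alpha<\xi\,(\alpha\in A\wedge \xi\in X_\alpha)\}$. $I$ is pleasant if whenever $A\in I$ and $X_\alpha\in I$ for all $\alpha$, then $\bigtriangledown_{\alpha\in A}X_\alpha\in I$. *)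

theory Defs
  imports Main
begin

text \<open>The cardinal kappa is represented by a type 'k together with a cardinal
  well-order r on UNIV :: 'k set (so kappa = UNIV, ordinals below kappa are
  the elements of 'k, and alpha < xi means (alpha, xi) in r, alpha ~= xi).\<close>

definition strict_less :: "'k rel \<Rightarrow> 'k \<Rightarrow> 'k \<Rightarrow> bool" where
  "strict_less r a b \<longleftrightarrow> (a, b) \<in> r \<and> a \<noteq> b"

definition is_ideal :: "'k rel \<Rightarrow> 'k set set \<Rightarrow> bool" where
  "is_ideal r I \<longleftrightarrow>
     (\<forall>X Y. X \<in> I \<and> Y \<subseteq> X \<longrightarrow> Y \<in> I) \<and>
     (\<forall>X Y. X \<in> I \<and> Y \<in> I \<longrightarrow> X \<union> Y \<in> I) \<and>
     (\<forall>F. F \<subseteq> I \<and> (card_of F, r) \<in> ordLess \<longrightarrow> \<Union>F \<in> I) \<and>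
     (\<forall>a. {a} \<in> I)"

definition restr_ideal :: "'k set set \<Rightarrow> 'k set \<Rightarrow> 'k set set" where
  "restr_ideal I A = {X. X \<inter> A \<in> I}"

definition diag_union :: "'k rel \<Rightarrow> 'k set \<Rightarrow> ('k \<Rightarrow> 'k set) \<Rightarrow> 'k set" where
  "diag_union r A X = {\<xi>. \<exists>\<alpha>. strict_less r \<alpha> \<xi> \<and> \<alpha> \<in> A \<and> \<xi> \<in> X \<alpha>}"

definition pleasant :: "'k rel \<Rightarrow> 'k set set \<Rightarrow> bool" where
  "pleasant r I \<longleftrightarrow> (\<forall>A X. A \<in> I \<and> (\<forall>\<alpha>. X \<alpha> \<in> I) \<longrightarrow> diag_union r A X \<in> I)"

definition densely_pleasant :: "'k rel \<Rightarrow> 'k set set \<Rightarrow> bool" where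
  "densely_pleasant r I \<longleftrightarrow>
     (\<forall>A. A \<notin> I \<longrightarrow> (\<exists>B. B \<notin> restr_ideal I A \<and> pleasant r (restr_ideal I B)))"

end

theory Submission
  imports Defs
begin

text \<open>Restricting to \<open>UNIV\<close> gives the forward direction. Conversely, an ideal is
  contained in each of its restrictions, so if a diagonal union \<open>D\<close> of sets in \<open>I\<close>
  were \<open>I\<close>-positive, a set \<open>B\<close> with \<open>D \<inter> B \<notin> I\<close> and \<open>I \<restriction> B\<close> pleasant would give
  \<open>D \<in> I \<restriction> B\<close>, i.e. \<open>D \<inter> B \<in> I\<close>.\<close>

lemma restr_ideal_UNIV [simp]: "restr_ideal I UNIV = I"
  by (simp add: restr_ideal_def)

lemma mem_restr_ideal_iff: "X \<in> restr_ideal I A \<longleftrightarrow> X \<inter> A \<in> I"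
  by (simp add: restr_ideal_def)

lemma is_ideal_subset_closed:
  assumes "is_ideal r I" and "X \<in> I" and "Y \<subseteq> X"
  shows "Y \<in> I"
proof -
  have "\<forall>X Y. X \<in> I \<and> Y \<subseteq> X \<longrightarrow> Y \<in> I"
    using assms(1) unfolding is_ideal_def by (rule conjunct1)
  with assms(2,3) show ?thesis
    by blast
qed

lemma subset_restr_ideal:
  assumes "\<And>X Y. X \<in> I \<Longrightarrow> Y \<subseteq> X \<Longrightarrow> Y \<in> I"
  shows "I \<subseteq> restr_ideal I A"
proof
  fix X
  assume "X \<in> I"
  then have "X \<inter> A \<in> I"
    by (rule assms) (rule Int_lower1)
  then show "X \<in> restr_ideal I A"
    by (simp add: mem_restr_ideal_iff)
qed

lemma pleasant_imp_densely_pleasant: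
  assumes "pleasant r I"
  shows "densely_pleasant r I"
  unfolding densely_pleasant_def
proof (intro allI impI)
  fix A
  assume "A \<notin> I"
  then have "UNIV \<notin> restr_ideal I A"
    by (simp add: mem_restr_ideal_iff)
  with assms show "\<exists>B. B \<notin> restr_ideal I A \<and> pleasant r (restr_ideal I B)"
    by auto
qed

lemma pleasantI:
  assumes "\<And>A X. A \<in> I \<Longrightarrow> (\<And>\<alpha>. X \<alpha> \<in> I) \<Longrightarrow> diag_union r A X \<in> I"
  shows "pleasant r I"
  using assms unfolding pleasant_def by blast

lemma pleasantD:
  assumes "pleasant r I" and "A \<in> I" and "\<And>\<alpha>. X \<alpha> \<in> I"
  shows "diag_union r A X \<in> I"
  using assms unfolding pleasant_def by blast

lemma densely_pleasant_imp_pleasant: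
  assumes subset_closed: "\<And>X Y. X \<in> I \<Longrightarrow> Y \<subseteq> X \<Longrightarrow> Y \<in> I"
    and dense: "densely_pleasant r I"
  shows "pleasant r I"
proof (rule pleasantI, rule ccontr)
  fix A X
  assume "A \<in> I" and "\<And>\<alpha>. X \<alpha> \<in> I" and "diag_union r A X \<notin> I"
  from dense \<open>diag_union r A X \<notin> I\<close> obtain B
    where "B \<notin> restr_ideal I (diag_union r A X)"
      and pleasant_B: "pleasant r (restr_ideal I B)"
    unfolding densely_pleasant_def by blast
  then have positive: "diag_union r A X \<notin> restr_ideal I B"
    by (simp add: mem_restr_ideal_iff Int_commute)
  have "I \<subseteq> restr_ideal I B"
    using subset_closed by (rule subset_restr_ideal)
  with \<open>A \<in> I\<close> \<open>\<And>\<alpha>. X \<alpha> \<in> I\<close>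
  have "A \<in> restr_ideal I B" and "\<And>\<alpha>. X \<alpha> \<in> restr_ideal I B"
    by auto
  with pleasant_B have "diag_union r A X \<in> restr_ideal I B"
    by (rule pleasantD)
  with positive show False
    by contradiction
qed

theorem proposition2p6:
  fixes r :: "'k rel" and I :: "'k set set"
  assumes "card_order r" and "regularCard r" and "(natLeq, r) \<in> ordLess"
    and "is_ideal r I"
  shows "pleasant r I \<longleftrightarrow> densely_pleasant r I"
proof
  show "densely_pleasant r I" if "pleasant r I"
    using that by (rule pleasant_imp_densely_pleasant)
  show "pleasant r I" if "densely_pleasant r I"
    using is_ideal_subset_closed[OF \<open>is_ideal r I\<close>] that
    by (rule densely_pleasant_imp_pleasant)
qed

end
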